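(* Let $F_0$ be a totally real number field of degree $r$, with real embeddings $v_1,\dots,v_r$, and fix an extension of $v_1$ to an embedding $\overline{F}_0\hookrightarrow\mathbb{C}$, through which all finite extensions of $F_0$ inside $\overline{F}_0$ are regarded as subfields of $\mathbb{C}$. Let $F$ be a totally real quadratic extension of $F_0$, with $\mathrm{Gal}(F/F_0)=\{1,\tau\}$. Let $\alpha\in F$ be such that $M=F(\sqrt{\alpha})$ is an almost totally complex (ATC) quadratic extension of $F$ which is real under $v_1$. Let $K=F_0(\sqrt{\alpha\alpha^\tau})$, where $\sqrt{\alpha\alpha^\tau}=\sqrt{\alpha}\sqrt{\alpha^\tau}$, and let $L=K(\sqrt{\alpha}+\sqrt{\alpha^\tau})$ and $L'=K(\sqrt{\alpha}-\sqrt{\alpha^\tau})$. Then $K$ is an almost totally real (ATR) extension of $F_0$ which is complex under $v_1$, and the fields $L$ and $L'$ are totally imaginary.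
   Context: A quadratic extension $M/F$ of a totally real field $F$ is almost totally complex (ATC) if all archimedean places of $F$ but exactly one extend to a complex place of $M$ (so $M$ has exactly two real places). A quadratic extension $K/F_0$ of a totally real field $F_0$ is almost totally real (ATR) if exactly one real place of $F_0$ extends to a complex place of $K$, all others extending to pairs of real places. "$M$ real under $v_1$" means the fixed embedding extending $v_1$ maps $M$ into $\mathbb{R}$. The fields $K$, $L$, $L'$ are subfields of the Galois closure $\mathcal{M}=F(\sqrt{\alpha},\sqrt{\alpha^\tau})$ of $M/F_0$, whose Galois group over $F_0$ is dihedral of order $8$. *)

theory Defs
  imports Complex_Main "HOL-Library.FuncSet"
begin

text \<open>All number fields are regarded as subfields of the complex numbers, via a
fixed embedding extending the real place v1.\<close>

definition subfield :: "complex set \<Rightarrow> bool" where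
  "subfield S \<longleftrightarrow> 0 \<in> S \<and> 1 \<in> S \<and>
     (\<forall>x\<in>S. \<forall>y\<in>S. x + y \<in> S \<and> x * y \<in> S) \<and>
     (\<forall>x\<in>S. - x \<in> S) \<and> (\<forall>x\<in>S. x \<noteq> 0 \<longrightarrow> inverse x \<in> S)"

definition gen_field :: "complex set \<Rightarrow> complex set" where
  "gen_field A = \<Inter>{T. subfield T \<and> A \<subseteq> T}"

definition adjoin :: "complex set \<Rightarrow> complex \<Rightarrow> complex set" where
  "adjoin F x = gen_field (insert x F)"

definition is_basis :: "complex set \<Rightarrow> complex set \<Rightarrow> complex set \<Rightarrow> bool" where
  "is_basis F M B \<longleftrightarrow> finite B \<and> B \<subseteq> M \<and>
     (\<forall>x\<in>M. \<exists>c. (\<forall>b\<in>B. c b \<in> F) \<and> x = (\<Sum>b\<in>B. c b * b)) \<and>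
     (\<forall>c. (\<forall>b\<in>B. c b \<in> F) \<and> (\<Sum>b\<in>B. c b * b) = 0 \<longrightarrow> (\<forall>b\<in>B. c b = 0))"

definition ext_degree :: "complex set \<Rightarrow> complex set \<Rightarrow> nat \<Rightarrow> bool" where
  "ext_degree F M n \<longleftrightarrow> subfield F \<and> subfield M \<and> F \<subseteq> M \<and>
     (\<exists>B. is_basis F M B \<and> card B = n)"

definition quadratic_ext :: "complex set \<Rightarrow> complex set \<Rightarrow> bool" where
  "quadratic_ext F M \<longleftrightarrow> ext_degree F M 2"

definition emb :: "complex set \<Rightarrow> (complex \<Rightarrow> complex) set" where
  "emb S = {\<sigma> \<in> extensional S. \<sigma> 1 = 1 \<and>
     (\<forall>x\<in>S. \<forall>y\<in>S. \<sigma> (x + y) = \<sigma> x + \<sigma> y \<and> \<sigma> (x * y) = \<sigma> x * \<sigma> y)}"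

definition real_emb :: "complex set \<Rightarrow> (complex \<Rightarrow> complex) \<Rightarrow> bool" where
  "real_emb S \<sigma> \<longleftrightarrow> \<sigma> ` S \<subseteq> \<real>"

definition number_field :: "complex set \<Rightarrow> nat \<Rightarrow> bool" where
  "number_field S r \<longleftrightarrow> ext_degree \<rat> S r"

definition totally_real :: "complex set \<Rightarrow> bool" where
  "totally_real S \<longleftrightarrow> (\<forall>\<sigma>\<in>emb S. real_emb S \<sigma>)"

definition totally_imaginary :: "complex set \<Rightarrow> bool" where
  "totally_imaginary S \<longleftrightarrow> (\<forall>\<sigma>\<in>emb S. \<not> real_emb S \<sigma>)"

definition extends_complex :: "complex set \<Rightarrow> complex set \<Rightarrow> (complex \<Rightarrow> complex) \<Rightarrow> bool" where
  "extends_complex F M v \<longleftrightarrow>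
     (\<exists>\<sigma>\<in>emb M. restrict \<sigma> F = v \<and> \<not> real_emb M \<sigma>)"

definition ATC :: "complex set \<Rightarrow> complex set \<Rightarrow> bool" where
  "ATC F M \<longleftrightarrow> totally_real F \<and> quadratic_ext F M \<and>
     (\<exists>!v. v \<in> emb F \<and> \<not> extends_complex F M v)"

text \<open>Almost totally real: exactly one real place of F0 extends to a complex place of K
(all others therefore extend to pairs of real places).\<close>
definition ATR :: "complex set \<Rightarrow> complex set \<Rightarrow> bool" where
  "ATR F0 K \<longleftrightarrow> totally_real F0 \<and> quadratic_ext F0 K \<and>
     (\<exists>!v. v \<in> emb F0 \<and> extends_complex F0 K v)"

end

theory Submission
  imports Defs
begin

text \<open>Fields are subfields of \<open>\<complex>\<close>, so the place \<open>v\<^sub>1\<close> is the identity embedding.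
  Since \<open>M = F(\<surd>\<alpha>)\<close> is real under \<open>v\<^sub>1\<close> and almost totally complex, \<open>\<alpha>\<close> is positive
  at \<open>v\<^sub>1\<close> and negative at every other real place of \<open>F\<close>, in particular \<open>\<tau> \<alpha> < 0\<close>.
  Hence the norm \<open>\<nu> = \<alpha> \<tau>(\<alpha>) \<in> F0\<close> is negative at \<open>v\<^sub>1\<close>, whereas every other place of \<open>F0\<close>
  extends to a place of \<open>F\<close> different from \<open>v\<^sub>1\<close> and \<open>v\<^sub>1 \<circ> \<tau>\<close>, where both \<open>\<alpha>\<close> and
  \<open>\<tau> \<alpha>\<close> become negative numbers \<open>a \<noteq> b\<close>, so that \<open>\<nu> \<mapsto> ab > 0\<close>: thus
  \<open>K = F0(\<surd>\<nu>)\<close> is ATR and complex under \<open>v\<^sub>1\<close>. A real place of \<open>L\<close> or \<open>L'\<close> lies over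
  such a place, and would map \<open>(\<surd>\<alpha> \<plusminus> \<surd>(\<tau> \<alpha>))\<^sup>2 = \<alpha> + \<tau> \<alpha> \<plusminus> 2\<surd>\<nu>\<close> to
  \<open>a + b \<plusminus> 2\<surd>(ab) = -(\<surd>-a \<mp> \<surd>-b)\<^sup>2 < 0\<close>.\<close>

context
  fixes S :: "complex set"
  assumes S: "subfield S"
begin

lemma subfield_zero [simp]: "0 \<in> S"
  and subfield_one [simp]: "1 \<in> S"
  and subfield_add [simp]: "x \<in> S \<Longrightarrow> y \<in> S \<Longrightarrow> x + y \<in> S"
  and subfield_mult [simp]: "x \<in> S \<Longrightarrow> y \<in> S \<Longrightarrow> x * y \<in> S"
  and subfield_uminus [simp]: "x \<in> S \<Longrightarrow> - x \<in> S"
  using S unfolding subfield_def by blast+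

lemma subfield_inverse [simp]: "x \<in> S \<Longrightarrow> inverse x \<in> S"
  using S unfolding subfield_def by (cases "x = 0") auto

lemma subfield_diff [simp]: "x \<in> S \<Longrightarrow> y \<in> S \<Longrightarrow> x - y \<in> S"
  using subfield_add[of x "- y"] by simp

lemma subfield_divide [simp]: "x \<in> S \<Longrightarrow> y \<in> S \<Longrightarrow> x / y \<in> S"
  by (simp add: divide_inverse)

lemma subfield_of_nat [simp]: "of_nat n \<in> S"
  by (induction n) simp_all

lemma subfield_numeral [simp]: "numeral n \<in> S"
  using subfield_of_nat[of "numeral n"] by simp

end

lemma subfield_Reals: "subfield \<real>"
  unfolding subfield_def by auto

lemma subfield_gen_field: "subfield (gen_field A)"
  unfolding gen_field_def subfield_def by blast

lemma gen_field_subset: "A \<subseteq> gen_field A"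
  unfolding gen_field_def by blast

lemma gen_field_least: "subfield T \<Longrightarrow> A \<subseteq> T \<Longrightarrow> gen_field A \<subseteq> T"
  unfolding gen_field_def by blast

lemma subfield_adjoin: "subfield (adjoin F x)"
  and adjoin_base_subset: "F \<subseteq> adjoin F x"
  and adjoin_generator: "x \<in> adjoin F x"
  unfolding adjoin_def using gen_field_subset[of "insert x F"] subfield_gen_field by auto

context
  fixes S :: "complex set" and \<sigma> :: "complex \<Rightarrow> complex"
  assumes S: "subfield S" and \<sigma>: "\<sigma> \<in> emb S"
begin

lemma emb_one: "\<sigma> 1 = 1"
  and emb_add: "x \<in> S \<Longrightarrow> y \<in> S \<Longrightarrow> \<sigma> (x + y) = \<sigma> x + \<sigma> y"
  and emb_mult: "x \<in> S \<Longrightarrow> y \<in> S \<Longrightarrow> \<sigma> (x * y) = \<sigma> x * \<sigma> y"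
  using \<sigma> unfolding emb_def by blast+

lemma emb_zero: "\<sigma> 0 = 0"
  using emb_add[of 0 0] S by simp

lemma emb_uminus: "x \<in> S \<Longrightarrow> \<sigma> (- x) = - \<sigma> x"
  using emb_add[of x "- x"] emb_zero S by (simp add: add_eq_0_iff2)

lemma emb_diff: "x \<in> S \<Longrightarrow> y \<in> S \<Longrightarrow> \<sigma> (x - y) = \<sigma> x - \<sigma> y"
  using emb_add[of x "- y"] emb_uminus[of y] S by simp

lemma emb_inverse: "x \<in> S \<Longrightarrow> \<sigma> (inverse x) = inverse (\<sigma> x)"
proof (cases "x = 0")
  case False
  assume x: "x \<in> S"
  have "\<sigma> x * \<sigma> (inverse x) = 1"
    using emb_mult[of x "inverse x"] emb_one x S False by simp
  then show ?thesis by (rule inverse_unique[symmetric])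
qed (simp add: emb_zero)

lemma emb_divide: "x \<in> S \<Longrightarrow> y \<in> S \<Longrightarrow> \<sigma> (x / y) = \<sigma> x / \<sigma> y"
  using S by (simp add: divide_inverse emb_mult emb_inverse)

lemma emb_inj:
  assumes x: "x \<in> S" and y: "y \<in> S" and eq: "\<sigma> x = \<sigma> y"
  shows "x = y"
proof (rule ccontr)
  assume "x \<noteq> y"
  then have "1 = \<sigma> ((x - y) * inverse (x - y))" by (simp add: emb_one)
  also have "\<dots> = \<sigma> (x - y) * \<sigma> (inverse (x - y))"
    using S x y by (intro emb_mult) simp_all
  also have "\<dots> = 0" using S x y eq by (simp add: emb_diff)
  finally show False by simp
qed

end

lemma restrict_emb: "\<sigma> \<in> emb T \<Longrightarrow> S \<subseteq> T \<Longrightarrow> subfield S \<Longrightarrow> restrict \<sigma> S \<in> emb S"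
  unfolding emb_def by (auto simp: subset_iff)

lemma id_emb: "subfield S \<Longrightarrow> restrict (\<lambda>x. x) S \<in> emb S"
  unfolding emb_def by auto

lemma emb_compose:
  assumes "\<sigma> \<in> emb T" "\<rho> \<in> emb S" "\<rho> ` S \<subseteq> T" "subfield S"
  shows "restrict (\<sigma> \<circ> \<rho>) S \<in> emb S"
  using assms unfolding emb_def by (auto simp: image_subset_iff)

lemma emb_preimage_subfield:
  assumes S: "subfield S" and \<sigma>: "\<sigma> \<in> emb S" and T: "subfield T"
  shows "subfield {x \<in> S. \<sigma> x \<in> T}"
  using S T
  by (auto simp: subfield_def[of "{x \<in> S. \<sigma> x \<in> T}"] emb_zero[OF S \<sigma>] emb_one[OF S \<sigma>]
      emb_add[OF S \<sigma>] emb_mult[OF S \<sigma>] emb_uminus[OF S \<sigma>] emb_inverse[OF S \<sigma>])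

lemma emb_gen_field_subset:
  assumes \<sigma>: "\<sigma> \<in> emb (gen_field A)" and T: "subfield T" and A: "\<sigma> ` A \<subseteq> T"
  shows "\<sigma> ` gen_field A \<subseteq> T"
proof -
  have "gen_field A \<subseteq> {x \<in> gen_field A. \<sigma> x \<in> T}"
    using emb_preimage_subfield[OF subfield_gen_field \<sigma> T] A gen_field_subset
    by (intro gen_field_least) auto
  then show ?thesis by blast
qed

lemma totally_real_subset_Reals: "subfield S \<Longrightarrow> totally_real S \<Longrightarrow> S \<subseteq> \<real>"
  using id_emb unfolding totally_real_def real_emb_def by force

lemma real_emb_adjoin:
  assumes F: "subfield F" "totally_real F"
    and \<sigma>: "\<sigma> \<in> emb (adjoin F x)" and x: "\<sigma> x \<in> \<real>"
  shows "real_emb (adjoin F x) \<sigma>"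
proof -
  have "restrict \<sigma> F \<in> emb F"
    using restrict_emb[OF \<sigma> adjoin_base_subset F(1)] .
  then have "restrict \<sigma> F ` F \<subseteq> \<real>"
    using F(2) unfolding totally_real_def real_emb_def by blast
  then have "\<sigma> ` F \<subseteq> \<real>" by simp
  then have "\<sigma> ` insert x F \<subseteq> \<real>" using x by simp
  then show ?thesis
    using emb_gen_field_subset[of \<sigma> "insert x F" \<real>] \<sigma> subfield_Reals
    unfolding real_emb_def adjoin_def by blast
qed

lemma Reals_iff_square_nonneg:
  fixes z :: complex
  assumes "z * z \<in> \<real>"
  shows "z \<in> \<real> \<longleftrightarrow> 0 \<le> Re (z * z)"
proof
  show "z \<in> \<real> \<Longrightarrow> 0 \<le> Re (z * z)" by (auto elim!: Reals_cases)
next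
  assume nonneg: "0 \<le> Re (z * z)"
  have "Re z = 0 \<or> Im z = 0" using assms by (auto simp: complex_is_Real_iff)
  then show "z \<in> \<real>"
  proof
    assume "Re z = 0"
    then have "Im z * Im z \<le> 0" using nonneg by simp
    then have "Im z * Im z = 0" using zero_le_square[of "Im z"] by linarith
    then show ?thesis by (simp add: complex_is_Real_iff)
  qed (simp add: complex_is_Real_iff)
qed

lemma csqrt_mult_self: "csqrt z * csqrt z = z"
  using power2_csqrt[of z] by (simp add: power2_eq_square)

lemma complex_quadratic_root: "\<exists>r::complex. r * r = b * r - c"
proof
  define r where "r = (b + csqrt (b * b - 4 * c)) / 2"
  have "2 * r = b + csqrt (b * b - 4 * c)" by (simp add: r_def)
  then have "csqrt (b * b - 4 * c) = 2 * r - b" by (simp add: algebra_simps)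
  then have disc: "(2 * r - b) * (2 * r - b) = b * b - 4 * c" by (metis csqrt_mult_self)
  have "4 * (r * r - (b * r - c)) = (2 * r - b) * (2 * r - b) - (b * b - 4 * c)"
    by (simp add: algebra_simps)
  also have "\<dots> = 0" using disc by simp
  finally have "r * r - (b * r - c) = 0" by (metis mult_eq_0_iff zero_neq_numeral)
  then show "r * r = b * r - c" by simp
qed

text \<open>If \<open>s\<^sup>2 = ab\<close> with \<open>a, b < 0\<close>, then \<open>a + b + 2s \<le> -(\<surd>-a - \<surd>-b)\<^sup>2\<close>.\<close>
lemma neg_eq_if_add_twice_sqrt_nonneg:
  fixes a b s :: real
  assumes "a < 0" "b < 0" "s * s = a * b" "0 \<le> a + b + 2 * s"
  shows "a = b"
proof -
  have "- (a + b) \<le> 2 * s" "0 \<le> - (a + b)" using assms by linarith+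
  then have "(- (a + b)) * (- (a + b)) \<le> (2 * s) * (2 * s)"
    by (intro mult_mono) auto
  then have "(a - b) * (a - b) \<le> 0" using assms(3) by (simp add: algebra_simps)
  then have "(a - b) * (a - b) = 0" using zero_le_square[of "a - b"] by linarith
  then show ?thesis by simp
qed

lemma is_basis_subset: "is_basis F0 F B \<Longrightarrow> B \<subseteq> F"
  unfolding is_basis_def by (elim conjE) assumption

lemma is_basis_spans:
  assumes "is_basis F0 F B" "x \<in> F"
  shows "\<exists>c. (\<forall>b\<in>B. c b \<in> F0) \<and> x = (\<Sum>b\<in>B. c b * b)"
proof -
  have "\<forall>x\<in>F. \<exists>c. (\<forall>b\<in>B. c b \<in> F0) \<and> x = (\<Sum>b\<in>B. c b * b)"
    using assms(1) unfolding is_basis_def by (elim conjE) assumption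
  then show ?thesis using assms(2) by blast
qed

lemma is_basis_independent:
  assumes "is_basis F0 F B" "\<forall>b\<in>B. c b \<in> F0" "(\<Sum>b\<in>B. c b * b) = 0" "b \<in> B"
  shows "c b = 0"
proof -
  have "\<forall>c. (\<forall>b\<in>B. c b \<in> F0) \<and> (\<Sum>b\<in>B. c b * b) = 0 \<longrightarrow> (\<forall>b\<in>B. c b = 0)"
    using assms(1) unfolding is_basis_def by (elim conjE) assumption
  then show ?thesis using assms(2-4) by blast
qed

lemma is_basis_nonzero:
  assumes F0: "subfield F0" and B: "is_basis F0 F B" and b: "b \<in> B"
  shows "b \<noteq> 0"
proof
  assume "b = 0"
  define c where "c b' = (if b' = b then 1 else 0 :: complex)" for b'
  have "(\<Sum>b'\<in>B. c b' * b') = 0"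
    using \<open>b = 0\<close> by (intro sum.neutral) (simp add: c_def)
  moreover have "\<forall>b'\<in>B. c b' \<in> F0" using F0 by (simp add: c_def)
  ultimately have "c b = 0" using is_basis_independent[OF B] b by blast
  then show False by (simp add: c_def)
qed

text \<open>Cayley--Hamilton for multiplication by \<open>x\<close> on the two-dimensional \<open>F0\<close>-space \<open>F\<close>.\<close>
lemma quadratic_ext_relation:
  assumes quad: "quadratic_ext F0 F" and x: "x \<in> F"
  shows "\<exists>t n. t \<in> F0 \<and> n \<in> F0 \<and> x * x = t * x - n"
proof -
  have F0: "subfield F0" and F: "subfield F"
    using quad unfolding quadratic_ext_def ext_degree_def by blast+
  obtain B where B: "is_basis F0 F B" "card B = 2"
    using quad unfolding quadratic_ext_def ext_degree_def by blast
  then obtain b1 b2 where b: "B = {b1, b2}" "b1 \<noteq> b2" by (meson card_2_iff)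
  have b_in: "b1 \<in> F" "b2 \<in> F" using is_basis_subset[OF B(1)] b by auto
  have "b1 \<noteq> 0" using is_basis_nonzero[OF F0 B(1)] b by simp
  have span: "\<exists>c1 c2. c1 \<in> F0 \<and> c2 \<in> F0 \<and> y = c1 * b1 + c2 * b2" if y: "y \<in> F" for y
  proof -
    obtain c where "\<forall>b\<in>B. c b \<in> F0" "y = (\<Sum>b\<in>B. c b * b)"
      using is_basis_spans[OF B(1) y] by blast
    then show ?thesis using b by (intro exI[of _ "c b1"] exI[of _ "c b2"]) simp
  qed
  obtain a11 a21 where a1: "a11 \<in> F0" "a21 \<in> F0" "x * b1 = a11 * b1 + a21 * b2"
    using span[of "x * b1"] F x b_in by auto
  obtain a12 a22 where a2: "a12 \<in> F0" "a22 \<in> F0" "x * b2 = a12 * b1 + a22 * b2"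
    using span[of "x * b2"] F x b_in by auto
  have "(x - a11) * b1 = a21 * b2" "(x - a22) * b2 = a12 * b1"
    using a1(3) a2(3) by (simp_all add: algebra_simps)
  then have "((x - a22) * (x - a11) - a21 * a12) * b1 = 0"
    by (metis (no_types) mult.assoc mult.left_commute right_minus_eq left_diff_distrib)
  then have "(x - a22) * (x - a11) - a21 * a12 = 0" using \<open>b1 \<noteq> 0\<close> by simp
  then have "x * x = (a11 + a22) * x - (a11 * a22 - a21 * a12)"
    by (simp add: algebra_simps)
  moreover have "a11 + a22 \<in> F0" "a11 * a22 - a21 * a12 \<in> F0" using F0 a1 a2 by simp_all
  ultimately show ?thesis by blast
qed

lemma coords_unique:
  assumes F0: "subfield F0" and \<alpha>: "\<alpha> \<notin> F0"
    and in_F0: "a \<in> F0" "b \<in> F0" "a' \<in> F0" "b' \<in> F0" and eq: "a + b * \<alpha> = a' + b' * \<alpha>"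
  shows "a = a' \<and> b = b'"
proof -
  have "b = b'"
  proof (rule ccontr)
    assume "b \<noteq> b'"
    then have "\<alpha> = (a - a') / (b' - b)" using eq by (simp add: field_simps)
    then show False using \<alpha> F0 in_F0 by simp
  qed
  then show ?thesis using eq by simp
qed

lemma emb_of_coords:
  assumes F0: "subfield F0" and span: "F = {a + b * \<alpha> |a b. a \<in> F0 \<and> b \<in> F0}"
    and rel: "t \<in> F0" "n \<in> F0" "\<alpha> * \<alpha> = t * \<alpha> - n"
    and v: "v \<in> emb F0" and r: "r * r = v t * r - v n"
    and w: "w \<in> extensional F"
    and w_coords: "\<And>a b. a \<in> F0 \<Longrightarrow> b \<in> F0 \<Longrightarrow> w (a + b * \<alpha>) = v a + v b * r"
  shows "w \<in> emb F"
  unfolding emb_def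
proof (intro CollectI conjI ballI)
  note v_hom = emb_zero[OF F0 v] emb_one[OF F0 v] emb_add[OF F0 v] emb_mult[OF F0 v]
    emb_diff[OF F0 v]
  show "w \<in> extensional F" by (rule w)
  show "w 1 = 1" using w_coords[of 1 0] F0 v_hom by simp
  fix x y assume "x \<in> F" "y \<in> F"
  then obtain a b a' b' where ab: "a \<in> F0" "b \<in> F0" "a' \<in> F0" "b' \<in> F0"
    and xy: "x = a + b * \<alpha>" "y = a' + b' * \<alpha>"
    using span by blast
  have wx: "w x = v a + v b * r" "w y = v a' + v b' * r" using w_coords ab xy by simp_all
  have "w (x + y) = w ((a + a') + (b + b') * \<alpha>)" using xy by (simp add: algebra_simps)
  also have "\<dots> = v (a + a') + v (b + b') * r" using F0 ab by (intro w_coords) simp_all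
  finally show "w (x + y) = w x + w y" using wx ab v_hom by (simp add: algebra_simps)
  have "x * y = a * a' + (a * b' + a' * b) * \<alpha> + b * b' * (\<alpha> * \<alpha>)"
    using xy by (simp add: algebra_simps)
  also have "\<dots> = (a * a' - b * b' * n) + (a * b' + a' * b + b * b' * t) * \<alpha>"
    unfolding rel(3) by (simp add: algebra_simps)
  finally have "w (x * y) = w ((a * a' - b * b' * n) + (a * b' + a' * b + b * b' * t) * \<alpha>)"
    by simp
  also have "\<dots> = v a * v a' - v b * v b' * v n + (v a * v b' + v a' * v b + v b * v b' * v t) * r"
    using w_coords ab rel F0 v_hom by simp
  also have "\<dots> = v a * v a' + (v a * v b' + v a' * v b) * r + v b * v b' * (r * r)"
    unfolding r by (simp add: algebra_simps)
  also have "\<dots> = w x * w y"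
    using wx by (simp add: algebra_simps)
  finally show "w (x * y) = w x * w y" .
qed

lemma emb_extend_by_root:
  assumes F0: "subfield F0"
    and span: "F = {a + b * \<alpha> |a b. a \<in> F0 \<and> b \<in> F0}" and \<alpha>: "\<alpha> \<notin> F0"
    and rel: "t \<in> F0" "n \<in> F0" "\<alpha> * \<alpha> = t * \<alpha> - n"
    and v: "v \<in> emb F0" and r: "r * r = v t * r - v n"
  shows "\<exists>w\<in>emb F. (\<forall>x\<in>F0. w x = v x) \<and> w \<alpha> = r"
proof -
  have "\<forall>x\<in>F. \<exists>a b. a \<in> F0 \<and> b \<in> F0 \<and> x = a + b * \<alpha>" using span by blast
  then obtain c d where cd: "\<forall>x\<in>F. c x \<in> F0 \<and> d x \<in> F0 \<and> x = c x + d x * \<alpha>" by metis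
  define w where "w = restrict (\<lambda>x. v (c x) + v (d x) * r) F"
  have w_coords: "w (a + b * \<alpha>) = v a + v b * r" if ab: "a \<in> F0" "b \<in> F0" for a b
  proof -
    have x: "a + b * \<alpha> \<in> F" using span ab by blast
    then have "c (a + b * \<alpha>) \<in> F0" "d (a + b * \<alpha>) \<in> F0"
      and "a + b * \<alpha> = c (a + b * \<alpha>) + d (a + b * \<alpha>) * \<alpha>"
      using cd by auto
    then have "a = c (a + b * \<alpha>) \<and> b = d (a + b * \<alpha>)"
      using coords_unique[OF F0 \<alpha> ab] by blast
    then show ?thesis using x by (simp add: w_def)
  qed
  have "w \<in> extensional F" by (simp add: w_def)
  then have "w \<in> emb F" by (rule emb_of_coords[OF F0 span rel v r _ w_coords])
  moreover have "\<forall>x\<in>F0. w x = v x"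
    using w_coords[of _ 0] F0 emb_zero[OF F0 v] by simp
  moreover have "w \<alpha> = r"
    using w_coords[of 0 1] F0 emb_zero[OF F0 v] emb_one[OF F0 v] by simp
  ultimately show ?thesis by blast
qed

lemma norm_form_nonzero:
  assumes F0: "subfield F0" and p: "p \<notin> F0" and ab: "a \<in> F0" "b \<in> F0"
    and nonzero: "a + b * p \<noteq> 0"
  shows "a * a - b * b * (p * p) \<noteq> 0"
proof
  assume N: "a * a - b * b * (p * p) = 0"
  show False
  proof (cases "b = 0")
    case True
    then show False using N nonzero by simp
  next
    case False
    have "(p - a / b) * (p + a / b) = - (a * a - b * b * (p * p)) / (b * b)"
      using False by (simp add: field_simps)
    then have "(p - a / b) * (p + a / b) = 0" using N by simp
    then have "p = a / b \<or> p = - (a / b)" by (simp add: eq_neg_iff_add_eq_0)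
    then show False using p F0 ab by auto
  qed
qed

lemma subfield_span_sqrt:
  assumes F0: "subfield F0" and sq: "p * p \<in> F0" and p: "p \<notin> F0"
  shows "subfield {a + b * p |a b. a \<in> F0 \<and> b \<in> F0}" (is "subfield ?P")
proof -
  have P_intro: "a + b * p \<in> ?P" if "a \<in> F0" "b \<in> F0" for a b using that by blast
  show ?thesis
    unfolding subfield_def[of ?P]
  proof (intro conjI ballI impI)
    show "0 \<in> ?P" "1 \<in> ?P" using P_intro[of 0 0] P_intro[of 1 0] F0 by simp_all
    fix z z' assume "z \<in> ?P" "z' \<in> ?P"
    then obtain a b a' b' where ab: "a \<in> F0" "b \<in> F0" "a' \<in> F0" "b' \<in> F0"
      and z: "z = a + b * p" "z' = a' + b' * p"
      by blast
    have "z + z' = (a + a') + (b + b') * p" using z by (simp add: algebra_simps)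
    then show "z + z' \<in> ?P" using P_intro F0 ab by simp
    have "z * z' = (a * a' + b * b' * (p * p)) + (a * b' + a' * b) * p"
      using z by (simp add: algebra_simps)
    then show "z * z' \<in> ?P" using P_intro F0 ab sq by simp
  next
    fix z assume "z \<in> ?P"
    then obtain a b where ab: "a \<in> F0" "b \<in> F0" and z: "z = a + b * p" by blast
    show "- z \<in> ?P" using P_intro[of "- a" "- b"] F0 ab z by simp
    assume "z \<noteq> 0"
    define N where "N = a * a - b * b * (p * p)"
    have "N \<noteq> 0" using norm_form_nonzero[OF F0 p ab] \<open>z \<noteq> 0\<close> z by (simp add: N_def)
    have "z * (a / N + (- b / N) * p) = (a * a - b * b * (p * p)) / N"
      using \<open>N \<noteq> 0\<close> by (simp add: z field_simps)
    then have "inverse z = a / N + (- b / N) * p"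
      using \<open>N \<noteq> 0\<close> by (intro inverse_unique) (simp add: N_def)
    moreover have "a / N + (- b / N) * p \<in> ?P"
      using F0 ab sq by (intro P_intro) (simp_all add: N_def)
    ultimately show "inverse z \<in> ?P" by simp
  qed
qed

lemma adjoin_sqrt_eq:
  assumes F0: "subfield F0" and sq: "p * p \<in> F0" and p: "p \<notin> F0"
  shows "adjoin F0 p = {a + b * p |a b. a \<in> F0 \<and> b \<in> F0}" (is "_ = ?P")
proof
  have "insert p F0 \<subseteq> ?P"
  proof
    fix z assume "z \<in> insert p F0"
    then have "z = 0 + 1 * p \<or> z = z + 0 * p \<and> z \<in> F0" by auto
    then show "z \<in> ?P" using F0 by fastforce
  qed
  then show "adjoin F0 p \<subseteq> ?P"
    unfolding adjoin_def by (rule gen_field_least[OF subfield_span_sqrt[OF assms]])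
next
  show "?P \<subseteq> adjoin F0 p"
  proof
    fix z assume "z \<in> ?P"
    then obtain a b where "a \<in> F0" "b \<in> F0" "z = a + b * p" by blast
    then show "z \<in> adjoin F0 p"
      using adjoin_base_subset[of F0 p] adjoin_generator[of p F0] subfield_adjoin[of F0 p]
      by (simp add: subset_iff)
  qed
qed

lemma quadratic_ext_adjoin_sqrt:
  assumes F0: "subfield F0" and sq: "p * p \<in> F0" and p: "p \<notin> F0"
  shows "quadratic_ext F0 (adjoin F0 p)"
proof -
  have "p \<noteq> 1" using p F0 by auto
  have "is_basis F0 (adjoin F0 p) {1, p}"
    unfolding is_basis_def
  proof (intro conjI ballI allI impI)
    show "finite {1, p}" by simp
    show "{1, p} \<subseteq> adjoin F0 p"
      using subfield_adjoin[of F0 p] adjoin_generator[of p F0] by simp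
  next
    fix z assume "z \<in> adjoin F0 p"
    then obtain a b where ab: "a \<in> F0" "b \<in> F0" "z = a + b * p"
      using adjoin_sqrt_eq[OF assms] by blast
    then show "\<exists>c. (\<forall>b\<in>{1, p}. c b \<in> F0) \<and> z = (\<Sum>b\<in>{1, p}. c b * b)"
      using \<open>p \<noteq> 1\<close> by (intro exI[of _ "\<lambda>x. if x = 1 then a else b"]) auto
  next
    fix c b assume c: "(\<forall>b\<in>{1, p}. c b \<in> F0) \<and> (\<Sum>b\<in>{1, p}. c b * b) = 0"
      and "b \<in> {1, p}"
    then have "c 1 + c p * p = 0 + 0 * p" using \<open>p \<noteq> 1\<close> by simp
    then have "c 1 = 0 \<and> c p = 0"
      using coords_unique[OF F0 p _ _ subfield_zero[OF F0] subfield_zero[OF F0]] c by blast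
    then show "c b = 0" using \<open>b \<in> {1, p}\<close> by auto
  qed
  moreover have "card {1, p} = 2" using \<open>p \<noteq> 1\<close> by simp
  ultimately show ?thesis
    using F0 subfield_adjoin adjoin_base_subset
    unfolding quadratic_ext_def ext_degree_def by blast
qed

locale quadratic_galois =
  fixes F0 F :: "complex set" and \<tau> :: "complex \<Rightarrow> complex"
  assumes quadratic: "quadratic_ext F0 F"
    and \<tau>_emb: "\<tau> \<in> emb F" and \<tau>_maps: "\<tau> ` F \<subseteq> F"
    and \<tau>_fixes_base: "\<forall>x\<in>F0. \<tau> x = x" and \<tau>_nontrivial: "\<exists>x\<in>F. \<tau> x \<noteq> x"
begin

lemma subfield_base [simp]: "subfield F0"
  and subfield_top [simp]: "subfield F"
  and base_subset: "F0 \<subseteq> F"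
  using quadratic unfolding quadratic_ext_def ext_degree_def by blast+

lemma \<tau>_in [simp]: "x \<in> F \<Longrightarrow> \<tau> x \<in> F"
  using \<tau>_maps by blast

lemmas \<tau>_add = emb_add[OF subfield_top \<tau>_emb]
  and \<tau>_mult = emb_mult[OF subfield_top \<tau>_emb]
  and \<tau>_diff = emb_diff[OF subfield_top \<tau>_emb]
  and \<tau>_divide = emb_divide[OF subfield_top \<tau>_emb]

text \<open>\<open>x\<close> and \<open>\<tau> x\<close> are both roots of the quadratic relation satisfied by \<open>x\<close>.\<close>
lemma trace_norm_in_base_if_nonfixed:
  assumes x: "x \<in> F" and nonfixed: "\<tau> x \<noteq> x"
  shows "x + \<tau> x \<in> F0" and "x * \<tau> x \<in> F0"
proof -
  obtain t n where tn: "t \<in> F0" "n \<in> F0" and rel: "x * x = t * x - n"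
    using quadratic_ext_relation[OF quadratic x] by blast
  have "t \<in> F" "n \<in> F" using tn base_subset by auto
  then have \<tau>_rel: "\<tau> x * \<tau> x = t * \<tau> x - n"
    using \<tau>_mult[OF x x] \<tau>_diff \<tau>_mult[of t x] \<tau>_fixes_base tn x rel by simp
  have "(x - \<tau> x) * (x + \<tau> x - t) = x * x - \<tau> x * \<tau> x - t * x + t * \<tau> x"
    by (simp add: algebra_simps)
  also have "\<dots> = 0" using rel \<tau>_rel by simp
  finally have "(x - \<tau> x) * (x + \<tau> x - t) = 0" .
  then have trace: "x + \<tau> x = t" using nonfixed by simp
  then show "x + \<tau> x \<in> F0" using tn by simp
  have "x * \<tau> x = t * x - x * x" using trace by (simp add: algebra_simps flip: trace)
  also have "\<dots> = n" using rel by simp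
  finally have "x * \<tau> x = n" .
  then show "x * \<tau> x \<in> F0" using tn by simp
qed

lemma fixed_in_base:
  assumes x: "x \<in> F" and fixed: "\<tau> x = x"
  shows "x \<in> F0"
proof -
  obtain x0 where x0: "x0 \<in> F" "\<tau> x0 \<noteq> x0" using \<tau>_nontrivial by blast
  have "\<tau> (x + x0) \<noteq> x + x0" using \<tau>_add x x0 fixed by simp
  then have "(x + x0) + \<tau> (x + x0) \<in> F0"
    using trace_norm_in_base_if_nonfixed x x0 by simp
  moreover have "x0 + \<tau> x0 \<in> F0" using trace_norm_in_base_if_nonfixed x0 by simp
  ultimately have "(x + x0) + \<tau> (x + x0) - (x0 + \<tau> x0) \<in> F0"
    by (rule subfield_diff[OF subfield_base])
  moreover have "(x + x0) + \<tau> (x + x0) - (x0 + \<tau> x0) = x + x"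
    using \<tau>_add x x0 fixed by simp
  ultimately have "2 * x \<in> F0" by simp
  then show ?thesis using subfield_divide[OF subfield_base, of "2 * x" 2] by simp
qed

lemma trace_in_base:
  assumes x: "x \<in> F"
  shows "x + \<tau> x \<in> F0"
proof (cases "\<tau> x = x")
  case True
  then have "x \<in> F0" using fixed_in_base x by blast
  then show ?thesis by (subst True) (rule subfield_add[OF subfield_base])
qed (use trace_norm_in_base_if_nonfixed x in blast)

lemma \<tau>_involution: "x \<in> F \<Longrightarrow> \<tau> (\<tau> x) = x"
  using \<tau>_fixes_base trace_in_base[of x] \<tau>_add[of x "\<tau> x"] by simp

lemma span_nonfixed:
  assumes \<alpha>: "\<alpha> \<in> F" "\<tau> \<alpha> \<noteq> \<alpha>"
  shows "F = {a + b * \<alpha> |a b. a \<in> F0 \<and> b \<in> F0}"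
proof (intro equalityI subsetI)
  fix x assume x: "x \<in> F"
  define b where "b = (x - \<tau> x) / (\<alpha> - \<tau> \<alpha>)"
  define a where "a = x - b * \<alpha>"
  have "b \<in> F" "a \<in> F" using x \<alpha> by (simp_all add: a_def b_def)
  have "\<tau> b = (\<tau> x - x) / (\<tau> \<alpha> - \<alpha>)"
    using x \<alpha> by (simp add: b_def \<tau>_divide \<tau>_diff \<tau>_involution)
  also have "\<dots> = b" unfolding b_def by (metis minus_diff_eq minus_divide_divide)
  finally have "b \<in> F0" using fixed_in_base \<open>b \<in> F\<close> by blast
  have "\<tau> a = \<tau> x - b * \<tau> \<alpha>"
    using x \<alpha> \<open>b \<in> F\<close> \<open>b \<in> F0\<close> \<tau>_fixes_base by (simp add: a_def \<tau>_diff \<tau>_mult)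
  also have "\<dots> = a" using \<alpha> by (simp add: a_def b_def field_simps)
  finally have "a \<in> F0" using fixed_in_base \<open>a \<in> F\<close> by blast
  moreover have "x = a + b * \<alpha>" by (simp add: a_def)
  ultimately show "x \<in> {a + b * \<alpha> |a b. a \<in> F0 \<and> b \<in> F0}" using \<open>b \<in> F0\<close> by blast
next
  fix x assume "x \<in> {a + b * \<alpha> |a b. a \<in> F0 \<and> b \<in> F0}"
  then obtain a b where "a \<in> F" "b \<in> F" "x = a + b * \<alpha>" using base_subset by blast
  then show "x \<in> F" using \<alpha> by simp
qed

lemma emb_extends:
  assumes v: "v \<in> emb F0"
  shows "\<exists>w\<in>emb F. \<forall>x\<in>F0. w x = v x"
proof -
  obtain \<alpha> where \<alpha>: "\<alpha> \<in> F" "\<tau> \<alpha> \<noteq> \<alpha>" using \<tau>_nontrivial by blast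
  then have "\<alpha> \<notin> F0" using \<tau>_fixes_base by auto
  obtain r where "r * r = v (\<alpha> + \<tau> \<alpha>) * r - v (\<alpha> * \<tau> \<alpha>)"
    using complex_quadratic_root by blast
  moreover have "\<alpha> * \<alpha> = (\<alpha> + \<tau> \<alpha>) * \<alpha> - \<alpha> * \<tau> \<alpha>" by (simp add: algebra_simps)
  ultimately show ?thesis
    using emb_extend_by_root[OF subfield_base span_nonfixed[OF \<alpha>] \<open>\<alpha> \<notin> F0\<close>
        trace_norm_in_base_if_nonfixed[OF \<alpha>] _ v]
    by blast
qed

end

locale atc_setting = quadratic_galois +
  fixes \<alpha> :: complex
  assumes totally_real_base: "totally_real F0"
    and totally_real_top: "totally_real F"
    and \<alpha>_in [simp]: "\<alpha> \<in> F"
    and M_ATC: "ATC F (adjoin F (csqrt \<alpha>))"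
    and real_under_v1: "adjoin F (csqrt \<alpha>) \<subseteq> \<real>"
begin

abbreviation "M \<equiv> adjoin F (csqrt \<alpha>)"

lemma emb_top_real: "w \<in> emb F \<Longrightarrow> x \<in> F \<Longrightarrow> w x \<in> \<real>"
  using totally_real_top unfolding totally_real_def real_emb_def by blast

lemma real_emb_M_if_nonneg:
  assumes \<sigma>: "\<sigma> \<in> emb M" and nonneg: "0 \<le> Re (\<sigma> \<alpha>)"
  shows "real_emb M \<sigma>"
proof -
  have "restrict \<sigma> F \<in> emb F" using restrict_emb[OF \<sigma> adjoin_base_subset subfield_top] .
  then have "\<sigma> \<alpha> \<in> \<real>" using emb_top_real[of "restrict \<sigma> F" \<alpha>] by simp
  moreover have "\<sigma> (csqrt \<alpha>) * \<sigma> (csqrt \<alpha>) = \<sigma> \<alpha>"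
    using emb_mult[OF subfield_adjoin \<sigma> adjoin_generator adjoin_generator]
    by (simp add: csqrt_mult_self)
  ultimately have "\<sigma> (csqrt \<alpha>) \<in> \<real>"
    using Reals_iff_square_nonneg[of "\<sigma> (csqrt \<alpha>)"] nonneg by simp
  then show ?thesis using real_emb_adjoin[OF subfield_top totally_real_top \<sigma>] by blast
qed

lemma \<alpha>_real_nonneg: "\<alpha> \<in> \<real>" "0 \<le> Re \<alpha>"
proof -
  have "csqrt \<alpha> \<in> \<real>" using real_under_v1 adjoin_generator by blast
  then have "csqrt \<alpha> * csqrt \<alpha> \<in> \<real>" "0 \<le> Re (csqrt \<alpha> * csqrt \<alpha>)"
    using Reals_iff_square_nonneg[of "csqrt \<alpha>"] by auto
  then show "\<alpha> \<in> \<real>" "0 \<le> Re \<alpha>" by (simp_all add: csqrt_mult_self)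
qed

lemma identity_not_extends_complex: "\<not> extends_complex F M (restrict (\<lambda>x. x) F)"
proof
  assume "extends_complex F M (restrict (\<lambda>x. x) F)"
  then obtain \<sigma> where \<sigma>: "\<sigma> \<in> emb M" "restrict \<sigma> F = restrict (\<lambda>x. x) F" "\<not> real_emb M \<sigma>"
    unfolding extends_complex_def by blast
  have "\<sigma> \<alpha> = \<alpha>" using fun_cong[OF \<sigma>(2), of \<alpha>] by simp
  then show False using real_emb_M_if_nonneg[OF \<sigma>(1)] \<alpha>_real_nonneg \<sigma>(3) by simp
qed

lemma emb_top_negative:
  assumes w: "w \<in> emb F" and ne: "w \<noteq> restrict (\<lambda>x. x) F"
  shows "w \<alpha> \<in> \<real>" and "Re (w \<alpha>) < 0"
proof -
  have "\<exists>!v. v \<in> emb F \<and> \<not> extends_complex F M v" using M_ATC unfolding ATC_def by blast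
  then have "extends_complex F M w"
    using id_emb[OF subfield_top] identity_not_extends_complex w ne by blast
  then obtain \<sigma> where \<sigma>: "\<sigma> \<in> emb M" "restrict \<sigma> F = w" "\<not> real_emb M \<sigma>"
    unfolding extends_complex_def by blast
  have "\<sigma> \<alpha> = w \<alpha>" using \<sigma>(2) by auto
  show "w \<alpha> \<in> \<real>" using emb_top_real[OF w \<alpha>_in] .
  show "Re (w \<alpha>) < 0"
    using real_emb_M_if_nonneg[OF \<sigma>(1)] \<sigma>(3) \<open>\<sigma> \<alpha> = w \<alpha>\<close> by force
qed

lemma \<tau>_\<alpha>_negative: "\<tau> \<alpha> \<in> \<real>" "Re (\<tau> \<alpha>) < 0"
proof -
  have "\<tau> \<noteq> restrict (\<lambda>x. x) F" using \<tau>_nontrivial by auto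
  then show "\<tau> \<alpha> \<in> \<real>" "Re (\<tau> \<alpha>) < 0" using emb_top_negative[OF \<tau>_emb] by auto
qed

lemma \<alpha>_positive: "0 < Re \<alpha>"
proof -
  have "\<alpha> \<noteq> 0" using \<tau>_\<alpha>_negative emb_zero[OF subfield_top \<tau>_emb] by auto
  then have "Re \<alpha> \<noteq> 0" using \<alpha>_real_nonneg(1) by (auto simp: complex_is_Real_iff complex_eq_iff)
  then show ?thesis using \<alpha>_real_nonneg(2) by simp
qed

lemma \<alpha>_nonfixed: "\<tau> \<alpha> \<noteq> \<alpha>"
  using \<alpha>_positive \<tau>_\<alpha>_negative by auto

lemma emb_top_cases:
  assumes w: "w \<in> emb F"
  shows "(\<forall>x\<in>F0. w x = x) \<or> (w \<alpha> \<in> \<real> \<and> Re (w \<alpha>) < 0 \<and> w (\<tau> \<alpha>) \<in> \<real> \<and> Re (w (\<tau> \<alpha>)) < 0)"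
proof (cases "w = restrict (\<lambda>x. x) F \<or> restrict (w \<circ> \<tau>) F = restrict (\<lambda>x. x) F")
  case True
  have "w x = x" if x: "x \<in> F0" for x
  proof -
    have "x \<in> F" using x base_subset by blast
    from True show ?thesis
    proof
      assume "w = restrict (\<lambda>x. x) F"
      then show ?thesis using \<open>x \<in> F\<close> by simp
    next
      assume w\<tau>: "restrict (w \<circ> \<tau>) F = restrict (\<lambda>x. x) F"
      have "w (\<tau> x) = x" using fun_cong[OF w\<tau>, of x] \<open>x \<in> F\<close> by simp
      then show ?thesis using \<tau>_fixes_base x by simp
    qed
  qed
  then show ?thesis by blast
next
  case False
  have "restrict (w \<circ> \<tau>) F \<in> emb F" using emb_compose[OF w \<tau>_emb \<tau>_maps subfield_top] .
  then show ?thesis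
    using False emb_top_negative[OF w] emb_top_negative[of "restrict (w \<circ> \<tau>) F"] by auto
qed

lemma trace_norm_in_base: "\<alpha> + \<tau> \<alpha> \<in> F0" "\<alpha> * \<tau> \<alpha> \<in> F0"
  using trace_norm_in_base_if_nonfixed[OF \<alpha>_in \<alpha>_nonfixed] by blast+

lemma norm_negative: "\<alpha> * \<tau> \<alpha> \<in> \<real>" "Re (\<alpha> * \<tau> \<alpha>) < 0"
  using \<alpha>_real_nonneg(1) \<tau>_\<alpha>_negative \<alpha>_positive
  by (auto simp: complex_is_Real_iff mult_pos_neg)

lemma emb_base_cases:
  assumes v: "v \<in> emb F0"
  shows "(\<forall>x\<in>F0. v x = x) \<or>
    (\<exists>a b. a < 0 \<and> b < 0 \<and> a \<noteq> b \<and>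
      v (\<alpha> + \<tau> \<alpha>) = complex_of_real (a + b) \<and> v (\<alpha> * \<tau> \<alpha>) = complex_of_real (a * b))"
proof -
  obtain w where w: "w \<in> emb F" "\<forall>x\<in>F0. w x = v x" using emb_extends[OF v] by blast
  from emb_top_cases[OF w(1)] show ?thesis
  proof
    assume "\<forall>x\<in>F0. w x = x"
    then show ?thesis using w(2) by auto
  next
    assume neg: "w \<alpha> \<in> \<real> \<and> Re (w \<alpha>) < 0 \<and> w (\<tau> \<alpha>) \<in> \<real> \<and> Re (w (\<tau> \<alpha>)) < 0"
    have "w \<alpha> \<noteq> w (\<tau> \<alpha>)"
      using emb_inj[OF subfield_top w(1) \<alpha>_in \<tau>_in[OF \<alpha>_in]] \<alpha>_nonfixed by metis
    moreover have "v (\<alpha> + \<tau> \<alpha>) = w \<alpha> + w (\<tau> \<alpha>)" "v (\<alpha> * \<tau> \<alpha>) = w \<alpha> * w (\<tau> \<alpha>)"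
      using w trace_norm_in_base emb_add[OF subfield_top w(1)] emb_mult[OF subfield_top w(1)]
      by auto
    ultimately show ?thesis
      using neg
      by (intro disjI2 exI[of _ "Re (w \<alpha>)"] exI[of _ "Re (w (\<tau> \<alpha>))"])
        (auto simp: complex_is_Real_iff complex_eq_iff)
  qed
qed

abbreviation "sqrt_norm \<equiv> csqrt \<alpha> * csqrt (\<tau> \<alpha>)"

abbreviation "K \<equiv> adjoin F0 sqrt_norm"

lemma sqrt_norm_square: "sqrt_norm * sqrt_norm = \<alpha> * \<tau> \<alpha>"
proof -
  have "sqrt_norm * sqrt_norm = (csqrt \<alpha> * csqrt \<alpha>) * (csqrt (\<tau> \<alpha>) * csqrt (\<tau> \<alpha>))"
    by (simp only: ac_simps)
  then show ?thesis by (simp add: csqrt_mult_self)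
qed

lemma sqrt_norm_not_real: "sqrt_norm \<notin> \<real>"
  using Reals_iff_square_nonneg[of sqrt_norm] sqrt_norm_square norm_negative by simp

lemma K_quadratic: "quadratic_ext F0 K"
proof (rule quadratic_ext_adjoin_sqrt)
  show "sqrt_norm * sqrt_norm \<in> F0" using sqrt_norm_square trace_norm_in_base by simp
  show "sqrt_norm \<notin> F0"
    using totally_real_subset_Reals[OF subfield_base totally_real_base] sqrt_norm_not_real by blast
qed simp

lemma K_not_real: "\<not> K \<subseteq> \<real>"
  using adjoin_generator sqrt_norm_not_real by blast

lemma K_ATR: "ATR F0 K"
  unfolding ATR_def
proof (intro conjI totally_real_base K_quadratic ex1I)
  let ?id = "restrict (\<lambda>x. x) F0"
  show "?id \<in> emb F0" by (simp add: id_emb)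
  show "extends_complex F0 K ?id"
    unfolding extends_complex_def
  proof (intro bexI conjI)
    show "restrict (\<lambda>x. x) K \<in> emb K" by (rule id_emb[OF subfield_adjoin])
    show "restrict (restrict (\<lambda>x. x) K) F0 = ?id"
      using adjoin_base_subset[of F0 sqrt_norm] by (auto simp: fun_eq_iff)
    show "\<not> real_emb K (restrict (\<lambda>x. x) K)"
      using adjoin_generator sqrt_norm_not_real unfolding real_emb_def by auto
  qed
  fix v assume "v \<in> emb F0 \<and> extends_complex F0 K v"
  then obtain \<sigma> where v: "v \<in> emb F0" and \<sigma>: "\<sigma> \<in> emb K" "restrict \<sigma> F0 = v" "\<not> real_emb K \<sigma>"
    unfolding extends_complex_def by blast
  have "\<sigma> sqrt_norm \<notin> \<real>"
    using real_emb_adjoin[OF subfield_base totally_real_base \<sigma>(1)] \<sigma>(3) by blast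
  moreover have "\<sigma> sqrt_norm * \<sigma> sqrt_norm = v (\<alpha> * \<tau> \<alpha>)"
    using emb_mult[OF subfield_adjoin \<sigma>(1) adjoin_generator adjoin_generator] sqrt_norm_square
      \<sigma>(2) trace_norm_in_base(2) by auto
  moreover have "v (\<alpha> * \<tau> \<alpha>) \<in> \<real>"
    using v totally_real_base trace_norm_in_base(2) unfolding totally_real_def real_emb_def by blast
  ultimately have "Re (v (\<alpha> * \<tau> \<alpha>)) < 0"
    using Reals_iff_square_nonneg[of "\<sigma> sqrt_norm"] by force
  have "\<forall>x\<in>F0. v x = x"
    using emb_base_cases[OF v]
  proof
    assume "\<exists>a b. a < 0 \<and> b < 0 \<and> a \<noteq> b \<and> v (\<alpha> + \<tau> \<alpha>) = of_real (a + b)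
      \<and> v (\<alpha> * \<tau> \<alpha>) = of_real (a * b)"
    then obtain a b where "a < 0" "b < 0" "v (\<alpha> * \<tau> \<alpha>) = of_real (a * b)" by blast
    then have "0 < Re (v (\<alpha> * \<tau> \<alpha>))" by (simp add: mult_neg_neg)
    then show ?thesis using \<open>Re (v (\<alpha> * \<tau> \<alpha>)) < 0\<close> by simp
  qed
  then show "v = ?id"
    using v unfolding emb_def by (auto intro!: extensionalityI[where A = F0])
qed

lemma totally_imaginary_adjoin:
  assumes q: "q * q = \<alpha> + \<tau> \<alpha> + 2 * sqrt_norm \<or> q * q = \<alpha> + \<tau> \<alpha> - 2 * sqrt_norm"
  shows "totally_imaginary (adjoin K q)"
  unfolding totally_imaginary_def
proof (intro ballI notI)
  let ?L = "adjoin K q"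
  fix \<sigma> assume \<sigma>: "\<sigma> \<in> emb ?L" and real: "real_emb ?L \<sigma>"
  have L: "subfield ?L" "q \<in> ?L" by (rule subfield_adjoin adjoin_generator)+
  have p: "sqrt_norm \<in> ?L" and F0L: "F0 \<subseteq> ?L"
    using adjoin_base_subset[of K q] adjoin_generator adjoin_base_subset by blast+
  have v: "restrict \<sigma> F0 \<in> emb F0" using restrict_emb[OF \<sigma> F0L subfield_base] .
  obtain s t where s: "\<sigma> sqrt_norm = of_real s" and t: "\<sigma> q = of_real t"
    using real p L(2) unfolding real_emb_def by (meson Reals_cases image_subset_iff)
  have norm: "\<sigma> (\<alpha> * \<tau> \<alpha>) = of_real (s * s)"
    using emb_mult[OF L(1) \<sigma> p p] sqrt_norm_square s by simp
  have "\<not> (\<forall>x\<in>F0. restrict \<sigma> F0 x = x)"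
  proof
    assume "\<forall>x\<in>F0. restrict \<sigma> F0 x = x"
    then have "\<sigma> (\<alpha> * \<tau> \<alpha>) = \<alpha> * \<tau> \<alpha>" using trace_norm_in_base(2) by auto
    then have "\<alpha> * \<tau> \<alpha> = of_real (s * s)" using norm by (rule subst)
    then have "Re (\<alpha> * \<tau> \<alpha>) = s * s" by (simp only: Re_complex_of_real)
    then show False using norm_negative(2) zero_le_square[of s] by linarith
  qed
  then obtain a b where ab: "a < 0" "b < 0" "a \<noteq> b"
    and trace: "\<sigma> (\<alpha> + \<tau> \<alpha>) = of_real (a + b)" and norm': "\<sigma> (\<alpha> * \<tau> \<alpha>) = of_real (a * b)"
    using emb_base_cases[OF v] trace_norm_in_base by auto
  have ss: "s * s = a * b" using norm' unfolding norm by (simp only: of_real_eq_iff)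
  have trace_L: "\<alpha> + \<tau> \<alpha> \<in> ?L" using F0L trace_norm_in_base by blast
  have two_p: "2 * sqrt_norm \<in> ?L" using L(1) p by simp
  have "\<sigma> (2 * sqrt_norm) = 2 * \<sigma> sqrt_norm"
    unfolding mult_2 by (rule emb_add[OF L(1) \<sigma> p p])
  then have "\<sigma> (\<alpha> + \<tau> \<alpha> + 2 * sqrt_norm) = of_real (a + b + 2 * s)"
    and "\<sigma> (\<alpha> + \<tau> \<alpha> - 2 * sqrt_norm) = of_real (a + b - 2 * s)"
    using emb_add[OF L(1) \<sigma> trace_L two_p] emb_diff[OF L(1) \<sigma> trace_L two_p] trace s by simp_all
  then have "\<sigma> (q * q) = of_real (a + b + 2 * s) \<or> \<sigma> (q * q) = of_real (a + b - 2 * s)"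
    using q by auto
  moreover have "\<sigma> (q * q) = of_real (t * t)" using emb_mult[OF L(1) \<sigma> L(2) L(2)] t by simp
  ultimately have "t * t = a + b + 2 * s \<or> t * t = a + b - 2 * s"
    by (simp only: of_real_eq_iff)
  then have "0 \<le> a + b + 2 * s \<or> 0 \<le> a + b + 2 * (- s)"
    using zero_le_square[of t] by (elim disjE) linarith+
  then have "a = b"
    using neg_eq_if_add_twice_sqrt_nonneg[OF ab(1,2), of s] neg_eq_if_add_twice_sqrt_nonneg[OF ab(1,2), of "- s"] ss
    by auto
  then show False using ab(3) by contradiction
qed

end

theorem mainTheorem2:
  fixes F0 F :: "complex set" and r :: nat
    and \<tau> :: "complex \<Rightarrow> complex" and \<alpha> :: complex
  assumes F0: "number_field F0 r" "totally_real F0"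
    and F: "quadratic_ext F0 F" "totally_real F"
    and tau: "\<tau> \<in> emb F" "\<tau> ` F = F" "\<forall>x\<in>F0. \<tau> x = x" "\<exists>x\<in>F. \<tau> x \<noteq> x"
    and alpha: "\<alpha> \<in> F"
    and M: "ATC F (adjoin F (csqrt \<alpha>))" "adjoin F (csqrt \<alpha>) \<subseteq> \<real>"
  shows "ATR F0 (adjoin F0 (csqrt \<alpha> * csqrt (\<tau> \<alpha>))) \<and>
         \<not> adjoin F0 (csqrt \<alpha> * csqrt (\<tau> \<alpha>)) \<subseteq> \<real> \<and>
         totally_imaginary (adjoin (adjoin F0 (csqrt \<alpha> * csqrt (\<tau> \<alpha>))) (csqrt \<alpha> + csqrt (\<tau> \<alpha>))) \<and>
         totally_imaginary (adjoin (adjoin F0 (csqrt \<alpha> * csqrt (\<tau> \<alpha>))) (csqrt \<alpha> - csqrt (\<tau> \<alpha>)))"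
proof -
  interpret atc_setting F0 F \<tau> \<alpha>
    using F0(2) F tau alpha M by unfold_locales auto
  have "(csqrt \<alpha> + csqrt (\<tau> \<alpha>)) * (csqrt \<alpha> + csqrt (\<tau> \<alpha>)) = \<alpha> + \<tau> \<alpha> + 2 * sqrt_norm"
    "(csqrt \<alpha> - csqrt (\<tau> \<alpha>)) * (csqrt \<alpha> - csqrt (\<tau> \<alpha>)) = \<alpha> + \<tau> \<alpha> - 2 * sqrt_norm"
    using csqrt_mult_self[of \<alpha>] csqrt_mult_self[of "\<tau> \<alpha>"] by (simp_all add: algebra_simps)
  then show ?thesis using K_ATR K_not_real totally_imaginary_adjoin by simp
qed

end
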